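(* Consider $J$ portfolios; portfolio $j$ consists of a set $\mathcal{I}_j$ of independent accounts with standard deviations $\sigma_i>0$ ($i\in\mathcal{I}_j$) and a dependent block $\mathcal{D}_j$ of $|\mathcal{D}_j|$ accounts whose total has standard deviation $\sigma_{\mathcal{D},j}\ge0$ (with $\sigma_{\mathcal{D},j}\sqrt{|\mathcal{D}_j|}=0$ if $\mathcal{D}_j=\emptyset$). Let $C>0$ be the budget and $V_j>0$ the variance bounds. Put $\gamma_j=\sigma_{\mathcal{D},j}\sqrt{|\mathcal{D}_j|}+\sum_{i\in\mathcal{I}_j}\sigma_i>0$ and $\epsilon_j=\gamma_j/V_j$. For a working set $\mathcal{B}\subsetneq\{1,\dots,J\}$ put $C^{\mathcal{B}}_{\mathrm{Rem}}=C-\sum_{j\in\mathcal{B}}\gamma_j\epsilon_j$, $d^{\mathcal{B}}=\sum_{j\notin\mathcal{B}}\gamma_j$, $\alpha(\mathcal{B})=C^{\mathcal{B}}_{\mathrm{Rem}}/d^{\mathcal{B}}$, and $e_j(\mathcal{B})=\epsilon_j$ if $j\in\mathcal{B}$, $e_j(\mathcal{B})=\alpha(\mathcal{B})$ if $j\notin\mathcal{B}$. The allocation $\mathbf{R}^\ast(\mathcal{B})$ assigns $R_i=\sigma_i e_j(\mathcal{B})$ realisations to $i\in\mathcal{I}_j$ and $r_j=\frac{\sigma_{\mathcal{D},j}}{\sqrt{|\mathcal{D}_j|}}e_j(\mathcal{B})$ to each account of $\mathcal{D}_j$; under it the variance of the estimator of portfolio $j$'s expected collections is $\operatorname{Var}_{\mathcal{B}}(\hat\mu_j)=\sigma^2_{\mathcal{D},j}/r_j+\sum_{i\in\mathcal{I}_j}\sigma_i^2/R_i=\gamma_j/e_j(\mathcal{B})$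 when $e_j(\mathcal{B})>0$, and we set $\operatorname{Var}_{\mathcal{B}}(\hat\mu_j)=+\infty$ if $e_j(\mathcal{B})\le0$ (no budget left). Suppose $\alpha(\mathcal{B})>0$, that at least two indices lie outside $\mathcal{B}$, and that some $j'\notin\mathcal{B}$ has $\operatorname{Var}_{\mathcal{B}}(\hat\mu_{j'})>V_{j'}$. Let $\mathcal{B}^+=\mathcal{B}\cup\{j'\}$. Then for every $j\notin\mathcal{B}^+$, $\operatorname{Var}_{\mathcal{B}^+}(\hat\mu_j)>\operatorname{Var}_{\mathcal{B}}(\hat\mu_j)$.
   Context: This concerns the relaxed allocation problem: choose positive reals $r_j$ (common realisation number for accounts of $\mathcal{D}_j$) and $R_i$ ($i\in\mathcal{I}=\cup_j\mathcal{I}_j$) to minimise $\sum_j\big(\sigma^2_{\mathcal{D},j}/r_j+\sum_{i\in\mathcal{I}_j}\sigma_i^2/R_i\big)$ subject to $\sum_j r_j|\mathcal{D}_j|+\sum_{i\in\mathcal{I}}R_i=C$ and $\sigma^2_{\mathcal{D},j}/r_j+\sum_{i\in\mathcal{I}_j}\sigma_i^2/R_i\le V_j$ for all $j$. $\mathbf{R}^\ast(\mathcal{B})$ is the solution of the stationarity equations of the Lagrangian when the constraints in $\mathcal{B}$ are active (hold with equality) and the others have zero multiplier. *)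

theory Defs
  imports "HOL-Analysis.Analysis" "HOL-Library.Extended_Real"
begin

text \<open>Portfolio j has independent accounts I j
 (a finite set of accounts of type 'a) with standard deviations sg i, and a dependent block
 of nD j accounts whose total has standard deviation sigD j.\<close>

definition gam :: "(nat \<Rightarrow> real) \<Rightarrow> (nat \<Rightarrow> nat) \<Rightarrow> ('a \<Rightarrow> real) \<Rightarrow> (nat \<Rightarrow> 'a set) \<Rightarrow> nat \<Rightarrow> real" where
  "gam sigD nD sg I j = sigD j * sqrt (real (nD j)) + (\<Sum>i\<in>I j. sg i)"

definition epsl :: "(nat \<Rightarrow> real) \<Rightarrow> (nat \<Rightarrow> nat) \<Rightarrow> ('a \<Rightarrow> real) \<Rightarrow> (nat \<Rightarrow> 'a set) \<Rightarrow> (nat \<Rightarrow> real) \<Rightarrow> nat \<Rightarrow> real" where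
  "epsl sigD nD sg I V j = gam sigD nD sg I j / V j"

definition CRem :: "(nat \<Rightarrow> real) \<Rightarrow> (nat \<Rightarrow> nat) \<Rightarrow> ('a \<Rightarrow> real) \<Rightarrow> (nat \<Rightarrow> 'a set) \<Rightarrow> (nat \<Rightarrow> real) \<Rightarrow> real \<Rightarrow> nat set \<Rightarrow> real" where
  "CRem sigD nD sg I V C B = C - (\<Sum>j\<in>B. gam sigD nD sg I j * epsl sigD nD sg I V j)"

definition dB :: "(nat \<Rightarrow> real) \<Rightarrow> (nat \<Rightarrow> nat) \<Rightarrow> ('a \<Rightarrow> real) \<Rightarrow> (nat \<Rightarrow> 'a set) \<Rightarrow> nat \<Rightarrow> nat set \<Rightarrow> real" where
  "dB sigD nD sg I J B = (\<Sum>j\<in>{1..J} - B. gam sigD nD sg I j)"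

definition alphaB :: "(nat \<Rightarrow> real) \<Rightarrow> (nat \<Rightarrow> nat) \<Rightarrow> ('a \<Rightarrow> real) \<Rightarrow> (nat \<Rightarrow> 'a set) \<Rightarrow> (nat \<Rightarrow> real) \<Rightarrow> real \<Rightarrow> nat \<Rightarrow> nat set \<Rightarrow> real" where
  "alphaB sigD nD sg I V C J B = CRem sigD nD sg I V C B / dB sigD nD sg I J B"

definition eB :: "(nat \<Rightarrow> real) \<Rightarrow> (nat \<Rightarrow> nat) \<Rightarrow> ('a \<Rightarrow> real) \<Rightarrow> (nat \<Rightarrow> 'a set) \<Rightarrow> (nat \<Rightarrow> real) \<Rightarrow> real \<Rightarrow> nat \<Rightarrow> nat set \<Rightarrow> nat \<Rightarrow> real" where
  "eB sigD nD sg I V C J B j =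
     (if j \<in> B then epsl sigD nD sg I V j else alphaB sigD nD sg I V C J B)"

definition rdep :: "(nat \<Rightarrow> real) \<Rightarrow> (nat \<Rightarrow> nat) \<Rightarrow> ('a \<Rightarrow> real) \<Rightarrow> (nat \<Rightarrow> 'a set) \<Rightarrow> (nat \<Rightarrow> real) \<Rightarrow> real \<Rightarrow> nat \<Rightarrow> nat set \<Rightarrow> nat \<Rightarrow> real" where
  "rdep sigD nD sg I V C J B j = sigD j / sqrt (real (nD j)) * eB sigD nD sg I V C J B j"

definition Rind :: "(nat \<Rightarrow> real) \<Rightarrow> (nat \<Rightarrow> nat) \<Rightarrow> ('a \<Rightarrow> real) \<Rightarrow> (nat \<Rightarrow> 'a set) \<Rightarrow> (nat \<Rightarrow> real) \<Rightarrow> real \<Rightarrow> nat \<Rightarrow> nat set \<Rightarrow> nat \<Rightarrow> 'a \<Rightarrow> real" where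
  "Rind sigD nD sg I V C J B j i = sg i * eB sigD nD sg I V C J B j"

definition VarB :: "(nat \<Rightarrow> real) \<Rightarrow> (nat \<Rightarrow> nat) \<Rightarrow> ('a \<Rightarrow> real) \<Rightarrow> (nat \<Rightarrow> 'a set) \<Rightarrow> (nat \<Rightarrow> real) \<Rightarrow> real \<Rightarrow> nat \<Rightarrow> nat set \<Rightarrow> nat \<Rightarrow> ereal" where
  "VarB sigD nD sg I V C J B j =
     (if eB sigD nD sg I V C J B j > 0 then
        ereal ((if nD j = 0 then 0 else (sigD j)\<^sup>2 / rdep sigD nD sg I V C J B j)
               + (\<Sum>i\<in>I j. (sg i)\<^sup>2 / Rind sigD nD sg I V C J B j i))
      else \<infinity>)"

end

theory Submission
  imports Defs
begin

text \<open>Under \<open>R*(B)\<close> the variance of an estimator is \<open>\<gamma>\<^sub>j / e\<^sub>j(B)\<close>, so it suffices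
  to show that adding the violating index \<open>j'\<close> lowers the common level \<open>\<alpha>\<close> of the free
  portfolios. Moving \<open>j'\<close> into the working set takes \<open>\<gamma>\<^sub>j'\<close> out of the denominator of \<open>\<alpha>\<close>
  and \<open>\<gamma>\<^sub>j' \<epsilon>\<^sub>j'\<close> out of its numerator; the violation means exactly \<open>\<epsilon>\<^sub>j' > \<alpha>(B)\<close>, so the
  removed part has ratio above \<open>\<alpha>(B)\<close> and the remaining ratio \<open>\<alpha>(B\<^sup>+)\<close> drops below \<open>\<alpha>(B)\<close>.\<close>

lemma VarB_eq_gam_div_eB:
  assumes "finite (I j)" and "\<And>i. i \<in> I j \<Longrightarrow> sg i > 0"
    and "eB sigD nD sg I V C J B j > 0"
  shows "VarB sigD nD sg I V C J B j = ereal (gam sigD nD sg I j / eB sigD nD sg I V C J B j)"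
proof -
  define e where "e = eB sigD nD sg I V C J B j"
  have e_pos: "e > 0" using assms(3) by (simp add: e_def)
  have dependent: "(if nD j = 0 then 0 else (sigD j)\<^sup>2 / rdep sigD nD sg I V C J B j)
      = sigD j * sqrt (real (nD j)) / e"
  proof (cases "nD j = 0 \<or> sigD j = 0")
    case False
    then have "sqrt (real (nD j)) > 0" by simp
    with False e_pos show ?thesis
      unfolding rdep_def e_def[symmetric] by (simp add: field_simps power2_eq_square)
  qed (auto simp: rdep_def)
  have independent: "(\<Sum>i\<in>I j. (sg i)\<^sup>2 / Rind sigD nD sg I V C J B j i) = (\<Sum>i\<in>I j. sg i) / e"
    unfolding sum_divide_distrib
  proof (rule sum.cong)
    fix i assume "i \<in> I j"
    with assms(2) e_pos show "(sg i)\<^sup>2 / Rind sigD nD sg I V C J B j i = sg i / e"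
      unfolding Rind_def e_def[symmetric] by (simp add: field_simps power2_eq_square)
  qed simp
  show ?thesis
    unfolding VarB_def e_def[symmetric] using e_pos dependent independent
    by (simp add: gam_def add_divide_distrib)
qed

lemma VarB_less_if_eB_less:
  assumes "finite (I j)" and "\<And>i. i \<in> I j \<Longrightarrow> sg i > 0" and "gam sigD nD sg I j > 0"
    and e_pos: "eB sigD nD sg I V C J B j > 0"
    and e_less: "eB sigD nD sg I V C J B' j < eB sigD nD sg I V C J B j"
  shows "VarB sigD nD sg I V C J B j < VarB sigD nD sg I V C J B' j"
proof (cases "eB sigD nD sg I V C J B' j > 0")
  case True
  with assms show ?thesis
    by (simp add: VarB_eq_gam_div_eB frac_less2)
next
  case False
  with assms show ?thesis
    by (simp add: VarB_eq_gam_div_eB) (simp add: VarB_def)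
qed

lemma dB_insert:
  assumes "j' \<in> {1..J} - B"
  shows "dB sigD nD sg I J B = dB sigD nD sg I J (insert j' B) + gam sigD nD sg I j'"
proof -
  have "{1..J} - insert j' B = ({1..J} - B) - {j'}" by blast
  then show ?thesis
    unfolding dB_def using sum.remove[OF _ assms, of "gam sigD nD sg I"] by simp
qed

lemma CRem_insert:
  assumes "finite B" and "j' \<notin> B"
  shows "CRem sigD nD sg I V C (insert j' B)
    = CRem sigD nD sg I V C B - gam sigD nD sg I j' * epsl sigD nD sg I V j'"
  unfolding CRem_def using assms by simp

lemma diff_div_less_div_add:
  fixes c d g x :: real
  assumes "0 < g" and "0 < d" and "c / (d + g) < x"
  shows "(c - g * x) / d < c / (d + g)"
proof -
  have "c < x * (d + g)" using assms by (simp add: divide_less_eq)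
  then have "g * c < g * (x * (d + g))" using \<open>0 < g\<close> by (rule mult_strict_left_mono)
  then have "(c - g * x) * (d + g) < c * d" by (simp add: algebra_simps)
  with assms show ?thesis by (simp add: divide_less_eq less_divide_eq)
qed

lemma alphaB_insert_less:
  assumes "B \<subseteq> {1..J}" and j'_out: "j' \<in> {1..J} - B"
    and "gam sigD nD sg I j' > 0" and "dB sigD nD sg I J (insert j' B) > 0"
    and "alphaB sigD nD sg I V C J B < epsl sigD nD sg I V j'"
  shows "alphaB sigD nD sg I V C J (insert j' B) < alphaB sigD nD sg I V C J B"
proof -
  have "finite B" using assms(1) finite_subset by blast
  with assms show ?thesis
    unfolding alphaB_def dB_insert[OF j'_out, of sigD nD sg I]
    by (simp add: CRem_insert diff_div_less_div_add)
qed

theorem lemma5: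
  fixes J :: nat and I :: "nat \<Rightarrow> 'a set" and sg :: "'a \<Rightarrow> real"
    and sigD :: "nat \<Rightarrow> real" and nD :: "nat \<Rightarrow> nat"
    and V :: "nat \<Rightarrow> real" and C :: real and B :: "nat set" and j' :: nat
  assumes finI: "\<And>j. j \<in> {1..J} \<Longrightarrow> finite (I j)"
    and sigma_pos: "\<And>j i. j \<in> {1..J} \<Longrightarrow> i \<in> I j \<Longrightarrow> sg i > 0"
    and sigD_nonneg: "\<And>j. j \<in> {1..J} \<Longrightarrow> sigD j \<ge> 0"
    and gam_pos: "\<And>j. j \<in> {1..J} \<Longrightarrow> gam sigD nD sg I j > 0"
    and C_pos: "C > 0"
    and V_pos: "\<And>j. j \<in> {1..J} \<Longrightarrow> V j > 0"
    and B_sub: "B \<subset> {1..J}"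
    and alpha_pos: "alphaB sigD nD sg I V C J B > 0"
    and two_out: "card ({1..J} - B) \<ge> 2"
    and j'_out: "j' \<in> {1..J} - B"
    and j'_viol: "VarB sigD nD sg I V C J B j' > ereal (V j')"
  shows "\<forall>j \<in> {1..J} - insert j' B.
           VarB sigD nD sg I V C J (insert j' B) j > VarB sigD nD sg I V C J B j"
proof
  fix j assume j: "j \<in> {1..J} - insert j' B"
  let ?\<alpha> = "alphaB sigD nD sg I V C J B"
  have j'_in: "j' \<in> {1..J}" using j'_out by simp
  have "eB sigD nD sg I V C J B j' = ?\<alpha>" using j'_out by (simp add: eB_def)
  with alpha_pos have "VarB sigD nD sg I V C J B j' = ereal (gam sigD nD sg I j' / ?\<alpha>)"
    using VarB_eq_gam_div_eB[of I j' sg] finI[OF j'_in] sigma_pos[OF j'_in] by simp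
  with j'_viol have "V j' < gam sigD nD sg I j' / ?\<alpha>" by simp
  with alpha_pos V_pos j'_out have \<epsilon>_above: "?\<alpha> < epsl sigD nD sg I V j'"
    by (simp add: epsl_def field_simps)
  have "gam sigD nD sg I j \<le> dB sigD nD sg I J (insert j' B)"
    unfolding dB_def by (rule member_le_sum) (use j gam_pos in \<open>auto intro: less_imp_le\<close>)
  with j gam_pos have "dB sigD nD sg I J (insert j' B) > 0" by fastforce
  with B_sub j'_out gam_pos \<epsilon>_above
  have "alphaB sigD nD sg I V C J (insert j' B) < ?\<alpha>" by (simp add: alphaB_insert_less)
  with j have "eB sigD nD sg I V C J (insert j' B) j < eB sigD nD sg I V C J B j"
    by (simp add: eB_def)
  with j finI sigma_pos gam_pos alpha_pos show "VarB sigD nD sg I V C J B j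
      < VarB sigD nD sg I V C J (insert j' B) j"
    by (intro VarB_less_if_eB_less) (auto simp: eB_def)
qed

end
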